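(* Let $K$ be a convex quadrilateral with bilinear map $F_K:(-1,1)^2\to K$ and $r\ge1$. Then for every $q\in P_{r-1}(K,\mathbb R)$ the tensor field $q\begin{pmatrix}0&1\\-1&0\end{pmatrix}$ belongs to $\Psi_r(K,\mathbb M)=\{(\hat\tau\circ F_K^{-1})DF_K^{-1}:$ each row of $\hat\tau$ lies in $P_{r-1,r}(\hat K)\times P_{r,r-1}(\hat K)\}$.
   Context: $\hat K=(-1,1)^2$, $F_K$ is bilinear (each component is in $Q_1(\hat K)$) and bijective onto the convex quadrilateral $K$; $DF_K$ is its Jacobian matrix (evaluated at $\hat x=F_K^{-1}(x)$). $P_{a,b}(\hat K)$ denotes polynomials of degree $\le a$ in $\hat x_1$ and $\le b$ in $\hat x_2$; $P_{r-1}(K,\mathbb R)$ denotes polynomials of total degree $\le r-1$ in the physical coordinates $x$. *)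

theory Defs
  imports "HOL-Analysis.Analysis"
begin

definition ref_square :: "(real^2) set" where
  "ref_square = {xh. \<forall>i. -1 < xh $ i \<and> xh $ i < 1}"

definition Pab :: "nat \<Rightarrow> nat \<Rightarrow> (real^2 \<Rightarrow> real) set" where
  "Pab a b = {f. \<exists>c :: nat \<Rightarrow> nat \<Rightarrow> real.
      \<forall>x. f x = (\<Sum>i\<le>a. \<Sum>j\<le>b. c i j * (x $ 1) ^ i * (x $ 2) ^ j)}"

definition Ptot :: "nat \<Rightarrow> (real^2 \<Rightarrow> real) set" where
  "Ptot n = {f. \<exists>c :: nat \<Rightarrow> nat \<Rightarrow> real.
      \<forall>x. f x = (\<Sum>i\<le>n. \<Sum>j\<le>n - i. c i j * (x $ 1) ^ i * (x $ 2) ^ j)}"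

definition Q1_map :: "(real^2 \<Rightarrow> real^2) \<Rightarrow> bool" where
  "Q1_map F \<longleftrightarrow> (\<forall>k. (\<lambda>x. F x $ k) \<in> Pab 1 1)"

definition cross2 :: "real^2 \<Rightarrow> real^2 \<Rightarrow> real" where
  "cross2 u v = u $ 1 * v $ 2 - u $ 2 * v $ 1"

text \<open>Convex (nondegenerate) quadrilateral: the open region bounded by four vertices
  z 0, z 1, z 2, z 3 listed in order, all turns strictly of the same sign.\<close>
definition convex_quadrilateral :: "(real^2) set \<Rightarrow> bool" where
  "convex_quadrilateral K \<longleftrightarrow> (\<exists>z :: nat \<Rightarrow> real^2.
      K = interior (convex hull {z 0, z 1, z 2, z 3}) \<and>
      ((\<forall>i<4. cross2 (z (Suc i mod 4) - z i) (z ((i + 2) mod 4) - z (Suc i mod 4)) > 0) \<or>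
       (\<forall>i<4. cross2 (z (Suc i mod 4) - z i) (z ((i + 2) mod 4) - z (Suc i mod 4)) < 0)))"

definition Jrot :: "real^2^2" where
  "Jrot = vector [vector [0, 1], vector [-1, 0]]"

definition Psi :: "nat \<Rightarrow> (real^2 \<Rightarrow> real^2) \<Rightarrow> (real^2) set \<Rightarrow> (real^2 \<Rightarrow> real^2^2) set" where
  "Psi r F K = {sigma. \<exists>tau :: real^2 \<Rightarrow> real^2^2.
      (\<forall>i. (\<lambda>x. tau x $ i $ 1) \<in> Pab (r - 1) r \<and> (\<lambda>x. tau x $ i $ 2) \<in> Pab r (r - 1)) \<and>
      (\<forall>x\<in>K. sigma x = tau (inv_into ref_square F x) **
                         matrix_inv (jacobian F (at (inv_into ref_square F x))))}"

end

theory Submission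
  imports Defs
begin

text \<open>Take tau_hat = (q o F) J DF, where J is the rotation; then
  (tau_hat o F^{-1}) DF^{-1} = q J. For bilinear F the first column of DF is affine in x2 alone
  and the second is affine in x1 alone, while q o F lies in P_{r-1,r-1}; hence the rows of tau_hat
  lie in P_{r-1,r} x P_{r,r-1}. DF is invertible on the open square by injectivity alone: the
  quadratic term of F cancels in F(x + v) - F(x - v) = 2 DF(x) v, so a kernel vector of DF(x)
  would identify two points of the square.\<close>

lemma Pab_monomial:
  assumes "i \<le> a" "j \<le> b"
  shows "(\<lambda>x. (x $ 1) ^ i * (x $ 2) ^ j) \<in> Pab a b"
  unfolding Pab_def
proof (intro CollectI exI allI)
  fix x :: "real^2"
  show "(x $ 1) ^ i * (x $ 2) ^ j
      = (\<Sum>i'\<le>a. \<Sum>j'\<le>b. (if i' = i \<and> j' = j then 1 else 0) * (x $ 1) ^ i' * (x $ 2) ^ j')"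
    by (subst sum.swap) (simp add: assms if_distrib[of "\<lambda>t. t * _"] flip: if_if_eq_conj cong: if_cong)
qed

lemma Pab_zero: "(\<lambda>x. 0) \<in> Pab a b"
  unfolding Pab_def by (intro CollectI exI[of _ "\<lambda>i j. 0"]) simp

lemma Pab_add: "f \<in> Pab a b \<Longrightarrow> g \<in> Pab a b \<Longrightarrow> (\<lambda>x. f x + g x) \<in> Pab a b"
  unfolding Pab_def
proof (elim CollectE exE, intro CollectI)
  fix c d
  assume "\<forall>x. f x = (\<Sum>i\<le>a. \<Sum>j\<le>b. c i j * (x $ 1) ^ i * (x $ 2) ^ j)"
    and "\<forall>x. g x = (\<Sum>i\<le>a. \<Sum>j\<le>b. d i j * (x $ 1) ^ i * (x $ 2) ^ j)"
  then show "\<exists>e. \<forall>x. f x + g x = (\<Sum>i\<le>a. \<Sum>j\<le>b. e i j * (x $ 1) ^ i * (x $ 2) ^ j)"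
    by (intro exI[of _ "\<lambda>i j. c i j + d i j"]) (simp add: distrib_right sum.distrib)
qed

lemma Pab_scale: "f \<in> Pab a b \<Longrightarrow> (\<lambda>x. k * f x) \<in> Pab a b"
  unfolding Pab_def
proof (elim CollectE exE, intro CollectI)
  fix c
  assume "\<forall>x. f x = (\<Sum>i\<le>a. \<Sum>j\<le>b. c i j * (x $ 1) ^ i * (x $ 2) ^ j)"
  then show "\<exists>e. \<forall>x. k * f x = (\<Sum>i\<le>a. \<Sum>j\<le>b. e i j * (x $ 1) ^ i * (x $ 2) ^ j)"
    by (intro exI[of _ "\<lambda>i j. k * c i j"]) (simp add: sum_distrib_left mult.assoc)
qed

lemma Pab_const: "(\<lambda>x. k) \<in> Pab a b"
  using Pab_scale[OF Pab_monomial[of 0 a 0 b], of k] by simp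

lemma Pab_sum:
  "finite S \<Longrightarrow> (\<And>s. s \<in> S \<Longrightarrow> f s \<in> Pab a b) \<Longrightarrow> (\<lambda>x. \<Sum>s\<in>S. f s x) \<in> Pab a b"
  by (induction S rule: finite_induct) (auto intro: Pab_zero Pab_add)

lemma PabE:
  assumes "f \<in> Pab a b"
  obtains c where "f = (\<lambda>x. \<Sum>i\<le>a. \<Sum>j\<le>b. c i j * ((x $ 1) ^ i * (x $ 2) ^ j))"
  using assms unfolding Pab_def by (auto simp: fun_eq_iff mult.assoc)

lemma Pab_subset: "a \<le> a' \<Longrightarrow> b \<le> b' \<Longrightarrow> Pab a b \<subseteq> Pab a' b'"
  by (auto elim!: PabE intro!: Pab_sum Pab_scale Pab_monomial)

lemma Pab_mult:
  assumes "f \<in> Pab a b" "g \<in> Pab a' b'"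
  shows "(\<lambda>x. f x * g x) \<in> Pab (a + a') (b + b')"
proof -
  obtain c where f: "f = (\<lambda>x. \<Sum>i\<le>a. \<Sum>j\<le>b. c i j * ((x $ 1) ^ i * (x $ 2) ^ j))"
    using assms(1) by (rule PabE)
  obtain d where g: "g = (\<lambda>x. \<Sum>k\<le>a'. \<Sum>l\<le>b'. d k l * ((x $ 1) ^ k * (x $ 2) ^ l))"
    using assms(2) by (rule PabE)
  have "f x * g x = (\<Sum>i\<le>a. \<Sum>j\<le>b. \<Sum>k\<le>a'. \<Sum>l\<le>b'.
      (c i j * d k l) * ((x $ 1) ^ (i + k) * (x $ 2) ^ (j + l)))" for x
  proof -
    have "f x * g x = (\<Sum>i\<le>a. \<Sum>j\<le>b. \<Sum>k\<le>a'. \<Sum>l\<le>b'.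
        (c i j * ((x $ 1) ^ i * (x $ 2) ^ j)) * (d k l * ((x $ 1) ^ k * (x $ 2) ^ l)))"
      unfolding f g by (simp only: sum_distrib_right, simp only: sum_distrib_left)
    then show ?thesis
      by (simp add: power_add mult_ac)
  qed
  then have "(\<lambda>x. f x * g x) = (\<lambda>x. \<Sum>i\<le>a. \<Sum>j\<le>b. \<Sum>k\<le>a'. \<Sum>l\<le>b'.
      (c i j * d k l) * ((x $ 1) ^ (i + k) * (x $ 2) ^ (j + l)))"
    by (rule ext)
  also have "\<dots> \<in> Pab (a + a') (b + b')"
    by (intro Pab_sum Pab_scale Pab_monomial) auto
  finally show ?thesis .
qed

lemma Pab_power: "f \<in> Pab a b \<Longrightarrow> (\<lambda>x. f x ^ n) \<in> Pab (n * a) (n * b)"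
  by (induction n) (auto intro: Pab_const dest: Pab_mult)

lemma Ptot_comp_Pab:
  assumes q: "q \<in> Ptot n"
    and F1: "(\<lambda>x. F x $ 1) \<in> Pab a b" and F2: "(\<lambda>x. F x $ 2) \<in> Pab a b"
  shows "(\<lambda>x. q (F x)) \<in> Pab (n * a) (n * b)"
proof -
  obtain c where c: "\<And>y. q y = (\<Sum>i\<le>n. \<Sum>j\<le>n - i. c i j * ((y $ 1) ^ i * (y $ 2) ^ j))"
    using q unfolding Ptot_def by (auto simp: mult.assoc)
  have "(\<lambda>x. (F x $ 1) ^ i * (F x $ 2) ^ j) \<in> Pab (n * a) (n * b)" if "i + j \<le> n" for i j
  proof -
    have "(\<lambda>x. (F x $ 1) ^ i * (F x $ 2) ^ j) \<in> Pab ((i + j) * a) ((i + j) * b)"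
      using Pab_mult[OF Pab_power[OF F1] Pab_power[OF F2]] by (simp add: distrib_right)
    also have "\<dots> \<subseteq> Pab (n * a) (n * b)"
      using that by (intro Pab_subset mult_right_mono) auto
    finally show ?thesis .
  qed
  then show ?thesis
    unfolding c by (intro Pab_sum Pab_scale) auto
qed

definition Q1_param :: "real^2 \<Rightarrow> real^2 \<Rightarrow> real^2 \<Rightarrow> real^2 \<Rightarrow> real^2 \<Rightarrow> real^2" where
  "Q1_param a b c d x = a + x $ 1 *\<^sub>R b + x $ 2 *\<^sub>R c + (x $ 1 * x $ 2) *\<^sub>R d"

lemma Q1_map_imp_Q1_param:
  assumes "Q1_map F"
  obtains a b c d where "F = Q1_param a b c d"
proof -
  have coeffs: "\<forall>k. \<exists>c. \<forall>x. F x $ k = (\<Sum>i\<le>1. \<Sum>j\<le>1. c i j * (x $ 1) ^ i * (x $ 2) ^ j)"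
    using assms unfolding Q1_map_def Pab_def by blast
  obtain c where "\<And>k x. F x $ k = (\<Sum>i\<le>1. \<Sum>j\<le>1. c k i j * (x $ 1) ^ i * (x $ 2) ^ j)"
    using choice[OF coeffs] by blast
  then have "F = Q1_param (\<chi> k. c k 0 0) (\<chi> k. c k 1 0) (\<chi> k. c k 0 1) (\<chi> k. c k 1 1)"
    by (simp add: fun_eq_iff vec_eq_iff Q1_param_def atMost_Suc algebra_simps)
  then show thesis by (rule that)
qed

lemma has_derivative_Q1_param:
  "(Q1_param a b c d has_derivative (\<lambda>h. h $ 1 *\<^sub>R (b + x $ 2 *\<^sub>R d) + h $ 2 *\<^sub>R (c + x $ 1 *\<^sub>R d)))
    (at x)"
  unfolding Q1_param_def [abs_def]
  by (auto intro!: derivative_eq_intros bounded_linear_vec_nth[THEN bounded_linear.has_derivative]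
      simp: algebra_simps)

lemma jacobian_Q1_param:
  "jacobian (Q1_param a b c d) (at x) $ k $ 1 = b $ k + x $ 2 * d $ k"
  "jacobian (Q1_param a b c d) (at x) $ k $ 2 = c $ k + x $ 1 * d $ k"
  unfolding jacobian_def frechet_derivative_at[OF has_derivative_Q1_param, symmetric]
  by (simp_all add: matrix_def axis_def)

lemma Q1_param_central_difference:
  "Q1_param a b c d (x + v) - Q1_param a b c d (x - v) = 2 *\<^sub>R (jacobian (Q1_param a b c d) (at x) *v v)"
  by (simp add: vec_eq_iff matrix_vector_mult_def sum_2 jacobian_Q1_param Q1_param_def algebra_simps)

lemma invertible_jacobian_Q1_param:
  assumes inj: "inj_on (Q1_param a b c d) S" and "open S" and "x \<in> S"
  shows "invertible (jacobian (Q1_param a b c d) (at x))"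
proof (rule ccontr)
  assume "\<not> invertible (jacobian (Q1_param a b c d) (at x))"
  then obtain v where "v \<noteq> 0" and kernel: "jacobian (Q1_param a b c d) (at x) *v v = 0"
    unfolding invertible_left_inverse matrix_left_invertible_ker by blast
  obtain e where "e > 0" and ball: "ball x e \<subseteq> S"
    using \<open>open S\<close> \<open>x \<in> S\<close> open_contains_ball by blast
  define w where "w = (e / (2 * norm v)) *\<^sub>R v"
  have "w \<noteq> 0" "norm w < e"
    using \<open>v \<noteq> 0\<close> \<open>e > 0\<close> by (simp_all add: w_def)
  then have "x + w \<in> S" "x - w \<in> S"
    using ball by (auto simp: dist_norm)
  moreover have "Q1_param a b c d (x + w) = Q1_param a b c d (x - w)"
    using Q1_param_central_difference[of a b c d x w] kernel
    by (simp add: w_def matrix_vector_mult_scaleR)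
  ultimately have "x + w = x - w"
    using inj by (blast dest: inj_onD)
  then show False
    using \<open>w \<noteq> 0\<close> by (simp add: vec_eq_iff)
qed

lemma Pab_jacobian_Q1_param_columns:
  "(\<lambda>y. (A ** jacobian (Q1_param a b c d) (at y)) $ i $ 1) \<in> Pab 0 1"
  "(\<lambda>y. (A ** jacobian (Q1_param a b c d) (at y)) $ i $ 2) \<in> Pab 1 0"
proof -
  have "(\<lambda>y. (A ** jacobian (Q1_param a b c d) (at y)) $ i $ 1)
      = (\<lambda>y. (A $ i $ 1 * b $ 1 + A $ i $ 2 * b $ 2) + (A $ i $ 1 * d $ 1 + A $ i $ 2 * d $ 2) * y $ 2)"
    by (simp add: fun_eq_iff matrix_matrix_mult_def sum_2 jacobian_Q1_param algebra_simps)
  then show "(\<lambda>y. (A ** jacobian (Q1_param a b c d) (at y)) $ i $ 1) \<in> Pab 0 1"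
    using Pab_add[OF Pab_const Pab_scale[OF Pab_monomial[of 0 0 1 1]]] by simp
  have "(\<lambda>y. (A ** jacobian (Q1_param a b c d) (at y)) $ i $ 2)
      = (\<lambda>y. (A $ i $ 1 * c $ 1 + A $ i $ 2 * c $ 2) + (A $ i $ 1 * d $ 1 + A $ i $ 2 * d $ 2) * y $ 1)"
    by (simp add: fun_eq_iff matrix_matrix_mult_def sum_2 jacobian_Q1_param algebra_simps)
  then show "(\<lambda>y. (A ** jacobian (Q1_param a b c d) (at y)) $ i $ 2) \<in> Pab 1 0"
    using Pab_add[OF Pab_const Pab_scale[OF Pab_monomial[of 1 1 0 0]]] by simp
qed

lemma matrix_mul_matrix_inv_cancel:
  fixes A :: "'a::semiring_1^'n^'n"
  assumes "invertible A"
  shows "B ** A ** matrix_inv A = B"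
proof -
  have "A ** matrix_inv A = mat 1"
    unfolding matrix_inv_def by (rule someI2_ex) (use assms in \<open>auto simp: invertible_def\<close>)
  then show ?thesis
    by (simp add: matrix_mul_assoc[symmetric])
qed

lemma open_ref_square: "open ref_square"
proof -
  have "ref_square = box (-1) 1"
    by (auto simp: ref_square_def mem_box_cart)
  then show ?thesis by (metis open_box)
qed

theorem mainTheorem11:
  fixes K :: "(real^2) set" and F :: "real^2 \<Rightarrow> real^2" and r :: nat and q :: "real^2 \<Rightarrow> real"
  assumes "convex_quadrilateral K"
    and "Q1_map F"
    and "bij_betw F ref_square K"
    and "r \<ge> 1"
    and "q \<in> Ptot (r - 1)"
  shows "(\<lambda>x. q x *\<^sub>R Jrot) \<in> Psi r F K"
proof -
  obtain a b c d where F: "F = Q1_param a b c d"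
    using assms(2) by (rule Q1_map_imp_Q1_param)
  define tau where "tau y = q (F y) *\<^sub>R (Jrot ** jacobian F (at y))" for y
  have "(\<lambda>y. q (F y)) \<in> Pab (r - 1) (r - 1)"
    using Ptot_comp_Pab[OF assms(5), of F 1 1] assms(2) by (simp add: Q1_map_def)
  then have rows: "(\<lambda>y. tau y $ i $ 1) \<in> Pab (r - 1) r" "(\<lambda>y. tau y $ i $ 2) \<in> Pab r (r - 1)" for i
    using Pab_mult[OF _ Pab_jacobian_Q1_param_columns(1)] Pab_mult[OF _ Pab_jacobian_Q1_param_columns(2)]
      assms(4) by (fastforce simp: tau_def F)+
  have "q x *\<^sub>R Jrot = tau y ** matrix_inv (jacobian F (at y))" if "x \<in> K" "y = inv_into ref_square F x" for x y
  proof -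
    have "y \<in> ref_square" "F y = x"
      using that assms(3) by (auto simp: bij_betw_def inv_into_into f_inv_into_f)
    then have "invertible (jacobian F (at y))"
      using assms(3) open_ref_square by (auto simp: F bij_betw_def intro: invertible_jacobian_Q1_param)
    then show ?thesis
      by (simp add: tau_def \<open>F y = x\<close> scalar_matrix_assoc[symmetric] matrix_mul_matrix_inv_cancel)
  qed
  with rows show ?thesis
    unfolding Psi_def by blast
qed

end
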